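(* For all positive integers $n$ and $j$, $R_n(j)=A_n(10j)$.
   Context: The continued fraction $[a_1;a_2:\dots:a_k]$ means $a_1+1/(a_2+1/(\cdots+1/a_k))$. For a sequence $(a_1,\dots,a_k)$ of positive integers with $k\ge2$, $\breve K(a_1,\dots,a_k)$ is the integer $c$ where $[a_1;a_2:\dots:a_{k-1}]=c/d$ with $\gcd(c,d)=1$, $c,d>0$ (the last entry $a_k$ is omitted). For a positive integer $n$ let $a_n=n^2+3$, $b_n=n^4+5n^2+5$, $r_n=(nb_n)^2+2$. Define $R_n(1)=\breve K(na_n,na_n,nb_n,nb_n)$, $R_n(2)=\breve K(na_n,na_n,nb_n,nb_n,nb_n,nb_n)$, and $R_n(j)=r_nR_n(j-1)-R_n(j-2)$ for $j>2$. Define $A_n(1)=1$, $A_n(2)=n(n^2+4)$, and $A_n(j)=nA_n(j-1)+A_n(j-2)$ for $j>2$. *)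

theory Defs
  imports Complex_Main
begin

fun cf :: "int list \<Rightarrow> rat" where
  "cf [] = 0"
| "cf [a] = of_int a"
| "cf (a # b # xs) = of_int a + 1 / cf (b # xs)"

definition Kbreve :: "int list \<Rightarrow> int" where
  "Kbreve as = fst (quotient_of (cf (butlast as)))"

definition a_seq :: "int \<Rightarrow> int" where "a_seq n = n^2 + 3"
definition b_seq :: "int \<Rightarrow> int" where "b_seq n = n^4 + 5*n^2 + 5"
definition r_seq :: "int \<Rightarrow> int" where "r_seq n = (n * b_seq n)^2 + 2"

fun R :: "int \<Rightarrow> nat \<Rightarrow> int" where
  "R n 0 = 0"
| "R n (Suc 0) = Kbreve [n * a_seq n, n * a_seq n, n * b_seq n, n * b_seq n]"
| "R n (Suc (Suc 0)) = Kbreve [n * a_seq n, n * a_seq n, n * b_seq n, n * b_seq n,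
                                n * b_seq n, n * b_seq n]"
| "R n (Suc (Suc (Suc j))) = r_seq n * R n (Suc (Suc j)) - R n (Suc j)"

fun A :: "int \<Rightarrow> nat \<Rightarrow> int" where
  "A n 0 = 0"
| "A n (Suc 0) = 1"
| "A n (Suc (Suc 0)) = n * (n^2 + 4)"
| "A n (Suc (Suc (Suc j))) = n * A n (Suc (Suc j)) + A n (Suc j)"

end

theory Submission
  imports Defs
begin

text \<open>R(1) and R(2) are numerators of explicit continued fractions with positive entries,
  computed in lowest terms by the usual numerator/denominator recursion and compared with
  A(10) and A(20) as polynomial identities in n.  For the induction,
  any solution of x(m+2) = c x(m+1) + x(m) satisfies x(m+10) = L x(m+5) + x(m) with
  L = c (c^4 + 5c^2 + 5); so its 5-step subsequences solve the same kind of recurrence with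
  parameter L, and two of those steps give x(m+20) = (L^2 + 2) x(m+10) - x(m).  For c = n
  this is exactly the recurrence defining R, with r_n = L^2 + 2.\<close>

fun cf_frac :: "int list \<Rightarrow> int \<times> int" where
  "cf_frac [] = (0, 1)"
| "cf_frac [a] = (a, 1)"
| "cf_frac (a # b # xs) = (let (p, q) = cf_frac (b # xs) in (a * p + q, p))"

lemma cf_frac_correct:
  assumes "xs \<noteq> []" and "\<forall>x\<in>set xs. x > 0"
  shows "cf xs = of_int (fst (cf_frac xs)) / of_int (snd (cf_frac xs))
    \<and> fst (cf_frac xs) > 0 \<and> snd (cf_frac xs) > 0 \<and> coprime (fst (cf_frac xs)) (snd (cf_frac xs))"
  using assms
proof (induction xs rule: cf_frac.induct)
  case (3 a b xs)
  obtain p q where pq: "cf_frac (b # xs) = (p, q)" by fastforce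
  with 3 have IH: "cf (b # xs) = of_int p / of_int q" "p > 0" "q > 0" "coprime p q" by auto
  have "a > 0" using "3.prems" by simp
  have "cf (a # b # xs) = of_int (a * p + q) / of_int p"
    using IH \<open>a > 0\<close> by (simp only: cf.simps IH(1)) (simp add: field_simps)
  moreover have "coprime (a * p + q) p"
    using IH(4) by (metis gcd_add_mult coprime_iff_gcd_eq_1 gcd.commute)
  ultimately show ?case using pq IH \<open>a > 0\<close> by (simp add: pos_add_strict)
qed auto

lemma quotient_of_int_div:
  assumes "q > 0" and "coprime p q"
  shows "quotient_of (of_int p / of_int q) = (p, q)"
  using assms by (simp add: Fract_of_int_quotient[symmetric] quotient_of_Fract normalize_def)

lemma Kbreve_eq_cf_frac:
  assumes "butlast xs \<noteq> []" and "\<forall>x\<in>set (butlast xs). x > 0"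
  shows "Kbreve xs = fst (cf_frac (butlast xs))"
  using cf_frac_correct[OF assms] unfolding Kbreve_def by (metis quotient_of_int_div fst_conv)

definition linrec :: "'a::comm_ring_1 \<Rightarrow> (nat \<Rightarrow> 'a) \<Rightarrow> bool" where
  "linrec c f \<longleftrightarrow> (\<forall>m. f (m + 2) = c * f (m + 1) + f m)"

lemma linrec_Suc_Suc: "linrec c f \<Longrightarrow> f (Suc (Suc m)) = c * f (Suc m) + f m"
  unfolding linrec_def by (metis add_2_eq_Suc' Suc_eq_plus1)

lemma linrec_step2:
  assumes "linrec c f"
  shows "f (m + 4) = (c^2 + 2) * f (m + 2) - f m"
  using linrec_Suc_Suc[OF assms] by (simp add: eval_nat_numeral algebra_simps)

lemma linrec_step5:
  assumes "linrec c f"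
  shows "f (m + 10) = c * (c^4 + 5 * c^2 + 5) * f (m + 5) + f m"
  using linrec_Suc_Suc[OF assms] by (simp add: eval_nat_numeral algebra_simps)

lemma linrec_every_fifth:
  assumes "linrec c f"
  shows "linrec (c * (c^4 + 5 * c^2 + 5)) (\<lambda>i. f (m + 5 * i))"
  unfolding linrec_def
proof
  fix i
  show "f (m + 5 * (i + 2)) = c * (c^4 + 5 * c^2 + 5) * f (m + 5 * (i + 1)) + f (m + 5 * i)"
    using linrec_step5[OF assms, of "m + 5 * i"] by (simp add: algebra_simps)
qed

lemma linrec_step10:
  assumes "linrec c f"
  shows "f (m + 20) = ((c * (c^4 + 5 * c^2 + 5))^2 + 2) * f (m + 10) - f m"
  using linrec_step2[OF linrec_every_fifth[OF assms, of m], of 0] by (simp add: algebra_simps)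

lemma linrec_A: "linrec n (\<lambda>m. A n (Suc m))"
  unfolding linrec_def by (simp add: numeral_2_eq_2)

lemma A_step10: "A n (m + 21) = r_seq n * A n (m + 11) - A n (m + 1)"
  using linrec_step10[OF linrec_A, of n m] by (simp add: r_seq_def b_seq_def add.commute)

lemma a_seq_b_seq_entries_pos:
  assumes "n \<ge> 1"
  shows "n * a_seq n > 0" and "n * b_seq n > 0"
  using assms by (auto simp: a_seq_def b_seq_def add_pos_nonneg)

lemma R_1:
  assumes "n \<ge> 1"
  shows "R n 1 = A n 10"
proof -
  have "R n 1 = fst (cf_frac [n * a_seq n, n * a_seq n, n * b_seq n])"
    using a_seq_b_seq_entries_pos[OF assms] by (simp add: Kbreve_eq_cf_frac)
  also have "\<dots> = A n 10"
    by (simp add: eval_nat_numeral a_seq_def b_seq_def) algebra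
  finally show ?thesis .
qed

lemma R_2:
  assumes "n \<ge> 1"
  shows "R n 2 = A n 20"
proof -
  have "R n 2 = fst (cf_frac [n * a_seq n, n * a_seq n, n * b_seq n, n * b_seq n, n * b_seq n])"
    using a_seq_b_seq_entries_pos[OF assms] by (simp add: Kbreve_eq_cf_frac numeral_2_eq_2)
  also have "\<dots> = A n 20"
    by (simp add: eval_nat_numeral a_seq_def b_seq_def) algebra
  finally show ?thesis .
qed

theorem lemma4:
  fixes n :: int and j :: nat
  assumes "n \<ge> 1" and "j \<ge> 1"
  shows "R n j = A n (10 * j)"
  using assms
proof (induction n j rule: R.induct)
  case (2 n)
  then show ?case using R_1 by (simp only: One_nat_def[symmetric] mult_1_right)
next
  case (3 n)
  then show ?case using R_2 by (simp only: numeral_2_eq_2[symmetric]) simp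
next
  case (4 n j)
  then have "R n (Suc (Suc (Suc j))) = r_seq n * A n (10 * j + 20) - A n (10 * j + 10)"
    by (simp add: add.commute)
  also have "\<dots> = A n (10 * j + 30)"
    using A_step10[of n "10 * j + 9"] by (simp add: add.commute)
  finally show ?case by (simp add: add.commute)
qed simp

end
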